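(* Let $K\ge 1$, $c>0$, $P_{\max}>0$, and for $k,k'\in\{1,\dots,K\}$ let $a_{k,k'}\ge 0$, $d_k\ge 0$, $n_k>0$ with $a_{k,k}\ge d_k$, and $\gamma_k\ge 0$. Define on $[0,\infty)^K$ $$f_k(\mathbf{P})=\log_2\Big(\sum_{k'}a_{k,k'}P_{k'}+n_k\Big),\quad g_k(\mathbf{P})=\log_2\Big(\sum_{k'}a_{k,k'}P_{k'}-d_kP_k+n_k\Big),$$ and for a fixed $\mathbf P^{(n)}\in[0,\infty)^K$ the first-order Taylor expansions $$\hat f_k(\mathbf{P},\mathbf{P}^{(n)})=f_k(\mathbf{P}^{(n)})+\frac{\sum_{k'}a_{k,k'}(P_{k'}-P^{(n)}_{k'})}{\ln 2\,(\sum_{k'}a_{k,k'}P^{(n)}_{k'}+n_k)},$$ $$\hat g_k(\mathbf{P},\mathbf{P}^{(n)})=g_k(\mathbf{P}^{(n)})+\frac{\sum_{k'}a_{k,k'}(P_{k'}-P^{(n)}_{k'})-d_k(P_k-P^{(n)}_k)}{\ln 2\,(\sum_{k'}a_{k,k'}P^{(n)}_{k'}-d_kP^{(n)}_k+n_k)},$$ $\hat R_k(\mathbf P,\mathbf P^{(n)})=c(\hat f_k(\mathbf P,\mathbf P^{(n)})-g_k(\mathbf P))$, $\overline R_k(\mathbf P,\mathbf P^{(n)})=c(f_k(\mathbf P)-\hat g_k(\mathbf P,\mathbf P^{(n)}))$, and $P_{\mathrm N}(\mathbf P,x)=C_0+\sum_k\Delta_kP_k+\sum_k\beta_kx_k$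 with $C_0>0$, $\Delta_k\ge 1$, $\beta_k>0$. Consider the problem $$\mathcal P_l':\ \max_{\mathbf P}\ \frac{\sum_k\overline R_k(\mathbf P,\mathbf P^{(n)})}{P_{\mathrm N}(\mathbf P,(\hat R_k(\mathbf P,\mathbf P^{(n)}))_k)}\quad\text{s.t. } 0\le P_k\le P_{\max},\ \ \gamma_k\Big(\sum_{k'}a_{k,k'}P_{k'}+n_k\Big)-(1+\gamma_k)d_kP_k\le 0\ \ \forall k.$$ Then $\mathcal P_l'$ satisfies the standard concave-convex fractional programming (CCFP) formulation.
   Context: Model: uplink network with $K$ users, $P_k$ transmit power of user $k$; $c=\tau_uB/(\tau_u+\tau_p)$, $a_{k,k'}=\mathbb{E}\{|\mathrm{IS}_{k,k'}|^2\}$, $d_k=|\mathbb{E}\{\mathrm{DS}_k\}|^2$, $n_k$ effective noise power; $c(f_k-g_k)$ is the rate of user $k$; $P_{\mathrm N}$ is the total network power consumption, affine in the user rates with positive coefficients; the second constraint family is the QoS (minimum rate) constraint with $\gamma_k=2^{\tau_cR_{k,\min}/(\tau_uB)}-1$. A maximization problem $\max_{\mathbf P\in\mathcal X} A(\mathbf P)/B(\mathbf P)$ is a concave-convex fractional program (CCFP) if the numerator $A$ is concave, the denominator $B$ is convex and nonnegative (positive) on the feasible set, and the feasible set $\mathcal X$ is convex. *)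

theory Defs
  imports "HOL-Analysis.Analysis"
begin

text \<open>Users are indexed by a finite type 'k (so K = CARD('k) \<ge> 1);
  power vectors are elements of real^'k.\<close>

definition CCFP :: "('a::real_vector \<Rightarrow> real) \<Rightarrow> ('a \<Rightarrow> real) \<Rightarrow> 'a set \<Rightarrow> bool" where
  "CCFP A B X \<longleftrightarrow> concave_on X A \<and> convex_on X B \<and> (\<forall>x\<in>X. B x > 0) \<and> convex X"

definition f_fun :: "('k::finite \<Rightarrow> 'k \<Rightarrow> real) \<Rightarrow> ('k \<Rightarrow> real) \<Rightarrow> 'k \<Rightarrow> real^'k \<Rightarrow> real" where
  "f_fun a nn k P = log 2 ((\<Sum>k'\<in>UNIV. a k k' * P$k') + nn k)"

definition g_fun :: "('k::finite \<Rightarrow> 'k \<Rightarrow> real) \<Rightarrow> ('k \<Rightarrow> real) \<Rightarrow> ('k \<Rightarrow> real) \<Rightarrow> 'k \<Rightarrow> real^'k \<Rightarrow> real" where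
  "g_fun a d nn k P = log 2 ((\<Sum>k'\<in>UNIV. a k k' * P$k') - d k * P$k + nn k)"

definition f_hat :: "('k::finite \<Rightarrow> 'k \<Rightarrow> real) \<Rightarrow> ('k \<Rightarrow> real) \<Rightarrow> 'k \<Rightarrow> real^'k \<Rightarrow> real^'k \<Rightarrow> real" where
  "f_hat a nn k P Pn = f_fun a nn k Pn +
     (\<Sum>k'\<in>UNIV. a k k' * (P$k' - Pn$k')) / (ln 2 * ((\<Sum>k'\<in>UNIV. a k k' * Pn$k') + nn k))"

definition g_hat :: "('k::finite \<Rightarrow> 'k \<Rightarrow> real) \<Rightarrow> ('k \<Rightarrow> real) \<Rightarrow> ('k \<Rightarrow> real) \<Rightarrow> 'k \<Rightarrow> real^'k \<Rightarrow> real^'k \<Rightarrow> real" where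
  "g_hat a d nn k P Pn = g_fun a d nn k Pn +
     ((\<Sum>k'\<in>UNIV. a k k' * (P$k' - Pn$k')) - d k * (P$k - Pn$k)) /
       (ln 2 * ((\<Sum>k'\<in>UNIV. a k k' * Pn$k') - d k * Pn$k + nn k))"

definition R_hat where
  "R_hat c a d nn k P Pn = c * (f_hat a nn k P Pn - g_fun a d nn k P)"

definition R_bar where
  "R_bar c a d nn k P Pn = c * (f_fun a nn k P - g_hat a d nn k P Pn)"

definition P_N :: "real \<Rightarrow> ('k::finite \<Rightarrow> real) \<Rightarrow> ('k \<Rightarrow> real) \<Rightarrow> real^'k \<Rightarrow> ('k \<Rightarrow> real) \<Rightarrow> real" where
  "P_N C0 \<Delta> \<beta> P x = C0 + (\<Sum>k\<in>UNIV. \<Delta> k * P$k) + (\<Sum>k\<in>UNIV. \<beta> k * x k)"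

definition feasible_set :: "real \<Rightarrow> ('k::finite \<Rightarrow> 'k \<Rightarrow> real) \<Rightarrow> ('k \<Rightarrow> real) \<Rightarrow> ('k \<Rightarrow> real) \<Rightarrow> ('k \<Rightarrow> real) \<Rightarrow> (real^'k) set" where
  "feasible_set Pmax a d nn \<gamma> = {P. \<forall>k. 0 \<le> P$k \<and> P$k \<le> Pmax \<and>
      \<gamma> k * ((\<Sum>k'\<in>UNIV. a k k' * P$k') + nn k) - (1 + \<gamma> k) * d k * P$k \<le> 0}"

end

theory Submission
  imports Defs
begin

text \<open>Both rates involve log_2 of the affine functions A_k(P) = \<Sum>a_{k,k'} P_{k'} + n_k and
  B_k(P) = A_k(P) - d_k P_k, which are positive on the nonnegative orthant (for B_k because
  a_{k,k} \<ge> d_k). Hence f_k and g_k are concave there, while the Taylor expansions f-hat_k and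
  g-hat_k are affine. So the numerator, a positive combination of f_k - g-hat_k, is concave, and
  the denominator, an affine function plus a positive combination of f-hat_k - g_k, is convex.
  The denominator is positive because the tangent f-hat_k majorizes the concave f_k, and
  f_k \<ge> g_k as A_k \<ge> B_k, so every R-hat_k is nonnegative. The feasible set is an
  intersection of affine sublevel sets, hence convex.\<close>

definition affine_functional :: "('a::real_vector \<Rightarrow> real) \<Rightarrow> bool" where
  "affine_functional L \<longleftrightarrow>
     (\<forall>x y u v. u + v = 1 \<longrightarrow> L (u *\<^sub>R x + v *\<^sub>R y) = u * L x + v * L y)"

lemma affine_functional_const: "affine_functional (\<lambda>x. b)"
  unfolding affine_functional_def by (metis mult.commute mult.right_neutral distrib_left)

lemma affine_functional_component: "affine_functional (\<lambda>x::real^'n. x$i)"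
  unfolding affine_functional_def by simp

lemma affine_functional_add:
  "affine_functional f \<Longrightarrow> affine_functional g \<Longrightarrow> affine_functional (\<lambda>x. f x + g x)"
  unfolding affine_functional_def by (simp add: algebra_simps)

lemma affine_functional_diff:
  "affine_functional f \<Longrightarrow> affine_functional g \<Longrightarrow> affine_functional (\<lambda>x. f x - g x)"
  unfolding affine_functional_def by (simp add: algebra_simps)

lemma affine_functional_minus: "affine_functional f \<Longrightarrow> affine_functional (\<lambda>x. - f x)"
  unfolding affine_functional_def by (simp add: algebra_simps)

lemma affine_functional_cmult: "affine_functional f \<Longrightarrow> affine_functional (\<lambda>x. b * f x)"
  unfolding affine_functional_def by (simp add: algebra_simps)

lemma affine_functional_divide: "affine_functional f \<Longrightarrow> affine_functional (\<lambda>x. f x / b)"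
  unfolding affine_functional_def by (simp add: algebra_simps add_divide_distrib)

lemma affine_functional_sum:
  assumes "\<And>i. i \<in> I \<Longrightarrow> affine_functional (f i)"
  shows "affine_functional (\<lambda>x. \<Sum>i\<in>I. f i x)"
  using assms unfolding affine_functional_def
  by (simp add: sum.distrib sum_distrib_left)

lemmas affine_functional_intros =
  affine_functional_const affine_functional_component affine_functional_add
  affine_functional_minus affine_functional_diff affine_functional_cmult
  affine_functional_divide affine_functional_sum

lemma affine_functional_imp_convex_on:
  "affine_functional L \<Longrightarrow> convex X \<Longrightarrow> convex_on X L"
  unfolding convex_on_def affine_functional_def by simp

lemma convex_affine_sublevel:
  assumes "affine_functional L"
  shows "convex {x. L x \<le> b}"
  unfolding convex_def
proof (intro ballI allI impI)
  fix x y and u v :: real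
  assume "x \<in> {x. L x \<le> b}" "y \<in> {x. L x \<le> b}" "0 \<le> u" "0 \<le> v" "u + v = 1"
  then have "u * L x + v * L y \<le> (u + v) * b"
    unfolding distrib_right by (intro add_mono mult_left_mono) auto
  then show "u *\<^sub>R x + v *\<^sub>R y \<in> {x. L x \<le> b}"
    using assms \<open>u + v = 1\<close> unfolding affine_functional_def by simp
qed

lemma concave_on_compose_affine:
  assumes "concave_on S h" "affine_functional L" "convex X" "L ` X \<subseteq> S"
  shows "concave_on X (\<lambda>x. h (L x))"
  unfolding concave_on_iff
proof (intro conjI assms(3) ballI allI impI)
  fix x y and u v :: real
  assume "x \<in> X" "y \<in> X" "0 \<le> u" "0 \<le> v" "u + v = 1"
  moreover have "L x \<in> S" "L y \<in> S"
    using \<open>x \<in> X\<close> \<open>y \<in> X\<close> assms(4) by auto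
  ultimately show "u * h (L x) + v * h (L y) \<le> h (L (u *\<^sub>R x + v *\<^sub>R y))"
    using assms(1,2) unfolding concave_on_iff affine_functional_def by simp
qed

lemma convex_on_sum_fun:
  assumes "convex X" "\<And>i. i \<in> I \<Longrightarrow> convex_on X (f i)"
  shows "convex_on X (\<lambda>x. \<Sum>i\<in>I. f i x)"
  using assms(2)
proof (induction I rule: infinite_finite_induct)
  case (insert i I)
  then show ?case by (simp add: convex_on_add)
qed (simp_all add: convex_on_const assms(1))

lemma concave_on_sum_fun:
  assumes "convex X" "\<And>i. i \<in> I \<Longrightarrow> concave_on X (f i)"
  shows "concave_on X (\<lambda>x. \<Sum>i\<in>I. f i x)"
  using convex_on_sum_fun[of X I "\<lambda>i x. - f i x"] assms
  unfolding concave_on_def by (simp add: sum_negf)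

lemma log_le_tangent:
  assumes "b > 1" "y > 0" "y0 > 0"
  shows "log b y \<le> log b y0 + (y - y0) / (ln b * y0)"
proof -
  have "log b y - log b y0 = (ln y - ln y0) / ln b"
    by (simp add: log_def diff_divide_distrib)
  also have "\<dots> \<le> (y - y0) / y0 / ln b"
    using assms by (intro divide_right_mono ln_diff_le) simp_all
  also have "\<dots> = (y - y0) / (ln b * y0)"
    by (simp add: mult.commute)
  finally show ?thesis
    by simp
qed

definition rx_plus_noise ::
    "('k::finite \<Rightarrow> 'k \<Rightarrow> real) \<Rightarrow> ('k \<Rightarrow> real) \<Rightarrow> 'k \<Rightarrow> real^'k \<Rightarrow> real" where
  "rx_plus_noise a nn k P = (\<Sum>k'\<in>UNIV. a k k' * P$k') + nn k"

definition interference_plus_noise ::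
    "('k::finite \<Rightarrow> 'k \<Rightarrow> real) \<Rightarrow> ('k \<Rightarrow> real) \<Rightarrow> ('k \<Rightarrow> real) \<Rightarrow> 'k \<Rightarrow> real^'k \<Rightarrow> real" where
  "interference_plus_noise a d nn k P = (\<Sum>k'\<in>UNIV. a k k' * P$k') - d k * P$k + nn k"

lemma affine_functional_rx_plus_noise: "affine_functional (rx_plus_noise a nn k)"
  unfolding rx_plus_noise_def by (intro affine_functional_intros)

lemma affine_functional_interference_plus_noise:
  "affine_functional (interference_plus_noise a d nn k)"
  unfolding interference_plus_noise_def by (intro affine_functional_intros)

lemma f_fun_eq: "f_fun a nn k P = log 2 (rx_plus_noise a nn k P)"
  unfolding f_fun_def rx_plus_noise_def ..

lemma g_fun_eq: "g_fun a d nn k P = log 2 (interference_plus_noise a d nn k P)"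
  unfolding g_fun_def interference_plus_noise_def ..

lemma f_hat_eq:
  "f_hat a nn k P Pn = log 2 (rx_plus_noise a nn k Pn) +
     (rx_plus_noise a nn k P - rx_plus_noise a nn k Pn) / (ln 2 * rx_plus_noise a nn k Pn)"
  unfolding f_hat_def f_fun_eq rx_plus_noise_def
  by (simp add: right_diff_distrib sum_subtractf)

lemma g_hat_eq:
  "g_hat a d nn k P Pn = log 2 (interference_plus_noise a d nn k Pn) +
     (interference_plus_noise a d nn k P - interference_plus_noise a d nn k Pn) /
       (ln 2 * interference_plus_noise a d nn k Pn)"
  unfolding g_hat_def g_fun_eq interference_plus_noise_def
  by (simp add: right_diff_distrib sum_subtractf algebra_simps)

lemma affine_functional_f_hat: "affine_functional (\<lambda>P. f_hat a nn k P Pn)"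
  unfolding f_hat_eq by (intro affine_functional_intros affine_functional_rx_plus_noise)

lemma affine_functional_g_hat: "affine_functional (\<lambda>P. g_hat a d nn k P Pn)"
  unfolding g_hat_eq
  by (intro affine_functional_intros affine_functional_interference_plus_noise)

lemma rx_plus_noise_pos:
  assumes "\<And>k'. a k k' \<ge> 0" "nn k > 0" "\<And>k'. P$k' \<ge> 0"
  shows "rx_plus_noise a nn k P > 0"
proof -
  have "(\<Sum>k'\<in>UNIV. a k k' * P$k') \<ge> 0"
    using assms(1,3) by (intro sum_nonneg) simp
  then show ?thesis
    using assms(2) unfolding rx_plus_noise_def by linarith
qed

lemma interference_plus_noise_pos:
  assumes "\<And>k'. a k k' \<ge> 0" "d k \<le> a k k" "nn k > 0" "\<And>k'. P$k' \<ge> 0"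
  shows "interference_plus_noise a d nn k P > 0"
proof -
  have "d k * P$k \<le> a k k * P$k"
    using assms(2,4) by (simp add: mult_right_mono)
  also have "\<dots> \<le> (\<Sum>k'\<in>UNIV. a k k' * P$k')"
    using assms(1,4) by (intro member_le_sum) simp_all
  finally show ?thesis
    using assms(3) unfolding interference_plus_noise_def by linarith
qed

lemma g_fun_le_f_fun:
  assumes "\<And>k'. a k k' \<ge> 0" "0 \<le> d k" "d k \<le> a k k" "nn k > 0" "\<And>k'. P$k' \<ge> 0"
  shows "g_fun a d nn k P \<le> f_fun a nn k P"
proof -
  have "interference_plus_noise a d nn k P \<le> rx_plus_noise a nn k P"
    using assms(2,5) unfolding interference_plus_noise_def rx_plus_noise_def by simp
  moreover have "interference_plus_noise a d nn k P > 0"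
    using assms by (intro interference_plus_noise_pos) simp_all
  ultimately show ?thesis
    unfolding f_fun_eq g_fun_eq by simp
qed

lemma f_fun_le_f_hat:
  assumes "\<And>k'. a k k' \<ge> 0" "nn k > 0" "\<And>k'. P$k' \<ge> 0" "\<And>k'. Pn$k' \<ge> 0"
  shows "f_fun a nn k P \<le> f_hat a nn k P Pn"
  unfolding f_fun_eq f_hat_eq
  using assms by (intro log_le_tangent rx_plus_noise_pos) simp_all

lemma R_hat_nonneg:
  assumes "c \<ge> 0" "\<And>k'. a k k' \<ge> 0" "0 \<le> d k" "d k \<le> a k k" "nn k > 0"
    and "\<And>k'. P$k' \<ge> 0" "\<And>k'. Pn$k' \<ge> 0"
  shows "R_hat c a d nn k P Pn \<ge> 0"
proof -
  have "g_fun a d nn k P \<le> f_fun a nn k P"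
    using assms by (intro g_fun_le_f_fun) simp_all
  also have "\<dots> \<le> f_hat a nn k P Pn"
    using assms by (intro f_fun_le_f_hat) simp_all
  finally show ?thesis
    using assms(1) unfolding R_hat_def by simp
qed

lemma convex_feasible_set: "convex (feasible_set Pmax a d nn \<gamma>)"
proof -
  have feasible_set_eq: "feasible_set Pmax a d nn \<gamma> =
    (\<Inter>k. {P. - P$k \<le> 0} \<inter> {P. P$k \<le> Pmax} \<inter>
      {P. \<gamma> k * rx_plus_noise a nn k P - (1 + \<gamma> k) * d k * P$k \<le> 0})"
    unfolding feasible_set_def rx_plus_noise_def by auto
  show ?thesis
    unfolding feasible_set_eq
    by (intro convex_INT convex_Int convex_affine_sublevel
        affine_functional_intros affine_functional_rx_plus_noise)
qed

lemma concave_on_f_fun: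
  assumes "\<And>k'. a k k' \<ge> 0" "nn k > 0" "convex X" "\<And>P k'. P \<in> X \<Longrightarrow> P$k' \<ge> 0"
  shows "concave_on X (f_fun a nn k)"
  unfolding f_fun_eq
  using assms
  by (intro concave_on_compose_affine[OF log_concave] affine_functional_rx_plus_noise)
     (auto intro: rx_plus_noise_pos)

lemma concave_on_g_fun:
  assumes "\<And>k'. a k k' \<ge> 0" "d k \<le> a k k" "nn k > 0" "convex X"
    and "\<And>P k'. P \<in> X \<Longrightarrow> P$k' \<ge> 0"
  shows "concave_on X (g_fun a d nn k)"
  unfolding g_fun_eq
  using assms
  by (intro concave_on_compose_affine[OF log_concave] affine_functional_interference_plus_noise)
     (auto intro: interference_plus_noise_pos)

lemma concave_on_sum_R_bar:
  assumes "c \<ge> 0" "\<And>k k'. a k k' \<ge> 0" "\<And>k. nn k > 0" "convex X"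
    and "\<And>P k. P \<in> X \<Longrightarrow> P$k \<ge> 0"
  shows "concave_on X (\<lambda>P. \<Sum>k\<in>UNIV. R_bar c a d nn k P Pn)"
  unfolding R_bar_def
  using assms
  by (intro concave_on_sum_fun concave_on_cmul concave_on_diff concave_on_f_fun
      affine_functional_imp_convex_on affine_functional_g_hat) auto

lemma convex_on_P_N_R_hat:
  assumes "c \<ge> 0" "\<And>k. \<beta> k \<ge> 0" "\<And>k k'. a k k' \<ge> 0" "\<And>k. d k \<le> a k k"
    and "\<And>k. nn k > 0" "convex X" "\<And>P k. P \<in> X \<Longrightarrow> P$k \<ge> 0"
  shows "convex_on X (\<lambda>P. P_N C0 \<Delta> \<beta> P (\<lambda>k. R_hat c a d nn k P Pn))"
proof -
  have "convex_on X (\<lambda>P. C0 + (\<Sum>k\<in>UNIV. \<Delta> k * P$k))"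
    using assms(6) by (intro affine_functional_imp_convex_on affine_functional_intros)
  moreover have "convex_on X (\<lambda>P. \<Sum>k\<in>UNIV. \<beta> k * R_hat c a d nn k P Pn)"
    unfolding R_hat_def
    using assms
    by (intro convex_on_sum_fun convex_on_cmul convex_on_diff concave_on_g_fun
        affine_functional_imp_convex_on affine_functional_f_hat) auto
  ultimately show ?thesis
    unfolding P_N_def by (rule convex_on_add)
qed

lemma P_N_pos:
  assumes "C0 > 0" "\<And>k. \<Delta> k \<ge> 0" "\<And>k. \<beta> k \<ge> 0" "\<And>k. P$k \<ge> 0" "\<And>k. x k \<ge> 0"
  shows "P_N C0 \<Delta> \<beta> P x > 0"
proof -
  have "(\<Sum>k\<in>UNIV. \<Delta> k * P$k) \<ge> 0" "(\<Sum>k\<in>UNIV. \<beta> k * x k) \<ge> 0"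
    using assms(2-5) by (simp_all add: sum_nonneg)
  then show ?thesis
    using assms(1) unfolding P_N_def by linarith
qed

theorem lemma5:
  fixes a :: "'k::finite \<Rightarrow> 'k \<Rightarrow> real" and d nn \<gamma> \<Delta> \<beta> :: "'k \<Rightarrow> real"
    and c Pmax C0 :: real and Pn :: "real^'k"
  assumes "c > 0" and "Pmax > 0"
    and "\<And>k k'. a k k' \<ge> 0" and "\<And>k. d k \<ge> 0" and "\<And>k. nn k > 0"
    and "\<And>k. a k k \<ge> d k" and "\<And>k. \<gamma> k \<ge> 0"
    and "\<And>k. Pn$k \<ge> 0"
    and "C0 > 0" and "\<And>k. \<Delta> k \<ge> 1" and "\<And>k. \<beta> k > 0"
  shows "CCFP (\<lambda>P. \<Sum>k\<in>UNIV. R_bar c a d nn k P Pn)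
              (\<lambda>P. P_N C0 \<Delta> \<beta> P (\<lambda>k. R_hat c a d nn k P Pn))
              (feasible_set Pmax a d nn \<gamma>)"
proof -
  let ?X = "feasible_set Pmax a d nn \<gamma>"
  have nonneg: "P$k \<ge> 0" if "P \<in> ?X" for P k
    using that unfolding feasible_set_def by simp
  have "c \<ge> 0" "\<And>k. \<beta> k \<ge> 0"
    using assms(1,11) by (simp_all add: less_imp_le)
  moreover have "\<Delta> k \<ge> 0" for k
    using assms(10)[of k] by linarith
  moreover have "R_hat c a d nn k P Pn \<ge> 0" if "P \<in> ?X" for k P
    using \<open>c \<ge> 0\<close> assms(3-6,8) nonneg[OF that] by (intro R_hat_nonneg) simp_all
  ultimately show ?thesis
    unfolding CCFP_def
    using assms(3,5,6,9) nonneg convex_feasible_set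
    by (intro conjI concave_on_sum_R_bar convex_on_P_N_R_hat ballI P_N_pos) auto
qed

end
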